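(* Assume $\sum_{i=1}^M b_i\ge 1$ and let $\mathbf r^\star=\mathbf r^\star(\epsilon)$ be the energy-adequate solution defined in the context. Then, with $M$, $(w_i)$, $(b_i)$ fixed, as $\epsilon\to0^+$, $$\big|\bar\Delta(\mathbf r^\star)-\bar\Delta_{\mathrm{opt}}(\epsilon)\big|\le 2\sqrt{\epsilon}\,C_1+o(\sqrt{\epsilon}),\qquad C_1=\sum_{i=1}^M\frac{w_i}{\min\{b_i,\beta^\star\sqrt{w_i}\}},$$ i.e. there is a function $h$ with $h(\epsilon)/\sqrt\epsilon\to0$ as $\epsilon\to 0^+$ such that the gap is at most $2\sqrt\epsilon C_1+h(\epsilon)$ for all $\epsilon>0$.
   Context: Fix an integer $M\ge1$, weights $w_1,\dots,w_M>0$, constants $b_1,\dots,b_M>0$, and $\epsilon>0$ (interpreted as the ratio of carrier-sensing time to mean packet transmission time). For $\mathbf r=(r_1,\dots,r_M)\in(0,\infty)^M$ write $S(\mathbf r)=\sum_{i=1}^M r_i$ and define $$\bar\Delta(\mathbf r)=\sum_{l=1}^M \frac{w_l e^{-r_l\epsilon}}{r_l}\, e^{\epsilon S(\mathbf r)}\big(1+S(\mathbf r)\big)+\sum_{l=1}^M w_l,\qquad \sigma_l(\mathbf r)=\frac{(1-e^{-r_l\epsilon})S(\mathbf r)+r_le^{-r_l\epsilon}}{S(\mathbf r)+1}.$$ Problem 1: minimize $\bar\Delta(\mathbf r)$ over $\mathbf r\in(0,\infty)^M$ subject to $\sigma_l(\mathbf r)\le b_l$ for all $l$. Its optimal (infimum)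 value is denoted $\bar\Delta_{\mathrm{opt}}(\epsilon)$. Energy-adequate solution (when $\sum_i b_i\ge1$): let $\beta^\star\in[0,\max_l b_l/\sqrt{w_l}]$ be the root of $\sum_{i=1}^M\min\{b_i,\beta^\star\sqrt{w_i}\}=1$, let $x^\star=-\tfrac12+\sqrt{\tfrac14+\tfrac1\epsilon}$, and set $r^\star_l=\min\{b_l,\beta^\star\sqrt{w_l}\}\,x^\star$ for $l=1,\dots,M$. *)

theory Defs
  imports "HOL-Analysis.Analysis"
begin

text \<open>Vectors r in (0,inf)^M are functions nat => real, with components indexed by {1..M}.\<close>

definition Ssum :: "nat \<Rightarrow> (nat \<Rightarrow> real) \<Rightarrow> real" where
  "Ssum M r = (\<Sum>i\<in>{1..M}. r i)"

definition DeltaBar :: "nat \<Rightarrow> (nat \<Rightarrow> real) \<Rightarrow> real \<Rightarrow> (nat \<Rightarrow> real) \<Rightarrow> real" where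
  "DeltaBar M w eps r =
     (\<Sum>l\<in>{1..M}. w l * exp (- r l * eps) / r l) * exp (eps * Ssum M r) * (1 + Ssum M r)
     + (\<Sum>l\<in>{1..M}. w l)"

definition sigma :: "nat \<Rightarrow> real \<Rightarrow> (nat \<Rightarrow> real) \<Rightarrow> nat \<Rightarrow> real" where
  "sigma M eps r l =
     ((1 - exp (- r l * eps)) * Ssum M r + r l * exp (- r l * eps)) / (Ssum M r + 1)"

definition feasible :: "nat \<Rightarrow> (nat \<Rightarrow> real) \<Rightarrow> real \<Rightarrow> (nat \<Rightarrow> real) \<Rightarrow> bool" where
  "feasible M b eps r \<longleftrightarrow> (\<forall>l\<in>{1..M}. 0 < r l \<and> sigma M eps r l \<le> b l)"

definition DeltaOpt :: "nat \<Rightarrow> (nat \<Rightarrow> real) \<Rightarrow> (nat \<Rightarrow> real) \<Rightarrow> real \<Rightarrow> real" where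
  "DeltaOpt M w b eps = Inf {DeltaBar M w eps r | r. feasible M b eps r}"

definition xstar :: "real \<Rightarrow> real" where
  "xstar eps = - 1/2 + sqrt (1/4 + 1/eps)"

definition rstar :: "(nat \<Rightarrow> real) \<Rightarrow> (nat \<Rightarrow> real) \<Rightarrow> real \<Rightarrow> real \<Rightarrow> nat \<Rightarrow> real" where
  "rstar w b beta eps l = min (b l) (beta * sqrt (w l)) * xstar eps"

end

theory Submission
  imports Defs "HOL-Real_Asymp.Real_Asymp"
begin

text \<open>Put \<open>a i = min (b i) (\<beta> \<surd>(w i))\<close>, so that \<open>\<Sum> a i = 1\<close> and \<open>r\<^sup>\<star> = x\<^sup>\<star> a\<close>.
  For feasible \<open>r\<close> with \<open>S = \<Sum> r i\<close>, the shares \<open>y l = r l / (S + 1)\<close> satisfy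
  \<open>y l \<le> \<sigma> l \<le> b l\<close> and \<open>\<Sum> y l \<le> 1\<close>, while \<open>\<Delta>(r) \<ge> \<Sum> w l + \<Sum> w l / y l\<close>. Over
  these relaxed constraints the convex function \<open>\<Sum> w l / y l\<close> is minimised by water filling
  at \<open>y = a\<close>, so \<open>\<Sum> w l + C\<^sub>1\<close> is a lower bound for \<open>\<Delta>\<^sub>o\<^sub>p\<^sub>t\<close>. Conversely \<open>r\<^sup>\<star>\<close> is
  feasible, and since \<open>x\<^sup>\<star> (1 + x\<^sup>\<star>) \<epsilon> = 1\<close> its excess over that bound is
  \<open>\<Sum> (w l / a l) (exp ((1 - a l) \<epsilon> x\<^sup>\<star>) (1 + 1/x\<^sup>\<star>) - 1)\<close>, each bracket being
  \<open>(2 - a l) \<surd>\<epsilon> + o(\<surd>\<epsilon>)\<close>. Hence the gap is even eventually at most \<open>2 \<surd>\<epsilon> C\<^sub>1\<close>.\<close>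

lemma xstar_pos: "eps > 0 \<Longrightarrow> xstar eps > 0"
proof -
  assume "eps > 0"
  then have "sqrt (1/4) < sqrt (1/4 + 1/eps)" by (intro real_sqrt_less_mono) simp
  moreover have "sqrt (1/4::real) = 1/2" by (simp add: real_sqrt_divide)
  ultimately show ?thesis unfolding xstar_def by simp
qed

lemma xstar_equation: "eps > 0 \<Longrightarrow> xstar eps * (1 + xstar eps) * eps = 1"
proof -
  assume e: "eps > 0"
  define s where "s = sqrt (1/4 + 1/eps)"
  have s2: "s^2 = 1/4 + 1/eps" unfolding s_def using e by simp
  have "xstar eps * (1 + xstar eps) = s^2 - 1/4" unfolding xstar_def s_def[symmetric]
    by (simp add: algebra_simps power2_eq_square)
  then show ?thesis using s2 e by (simp add: field_simps)
qed

lemma eventually_xstar_excess_le: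
  fixes a :: real
  assumes "a > 0"
  shows "eventually (\<lambda>e. exp ((1 - a) * (e * xstar e)) * (1 + 1 / xstar e) - 1 \<le> 2 * sqrt e)
           (at_right 0)"
proof -
  have "((\<lambda>e. (exp ((1-a) * (e * (-1/2 + sqrt(1/4+1/e)))) * (1 + 1/(-1/2 + sqrt(1/4+1/e))) - 1)
            / sqrt e) \<longlongrightarrow> 2 - a) (at_right (0::real))"
    by real_asymp
  then have "eventually (\<lambda>e. (exp ((1-a) * (e * xstar e)) * (1 + 1 / xstar e) - 1) / sqrt e < 2)
               (at_right 0)"
    unfolding xstar_def using order_tendstoD(2) assms by fastforce
  then show ?thesis
    using eventually_at_right_less[of 0]
    by eventually_elim (simp add: divide_less_eq)
qed

lemma weight_div_ge_tangent:
  fixes w a y :: real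
  assumes "w \<ge> 0" "a > 0" "y > 0"
  shows "w / a - w / a^2 * (y - a) \<le> w / y"
proof -
  have "w / y - (w / a - w / a^2 * (y - a)) = w * (y - a)^2 / (a^2 * y)"
    using assms by (simp add: field_simps power2_eq_square)
  moreover have "w * (y - a)^2 / (a^2 * y) \<ge> 0" using assms by simp
  ultimately show ?thesis by linarith
qed

text \<open>The multiplier \<open>1/\<beta>\<^sup>2\<close> certifies \<open>a\<close> as minimiser of \<open>\<Sum> w i / y i\<close> under \<open>y \<le> b\<close>,
  \<open>\<Sum> y i \<le> 1\<close>: the tangent slope \<open>- w i / (a i)\<^sup>2\<close> equals \<open>- 1/\<beta>\<^sup>2\<close> where the cap \<open>b i\<close> is not
  active, and is steeper where it is.\<close>

lemma sum_weight_div_ge_water_filling: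
  fixes w b y :: "'i \<Rightarrow> real"
  assumes beta: "beta > 0"
    and w: "\<forall>i\<in>I. w i > 0" and y: "\<forall>i\<in>I. 0 < y i \<and> y i \<le> b i"
    and ysum: "sum y I \<le> 1"
    and asum: "(\<Sum>i\<in>I. min (b i) (beta * sqrt (w i))) = 1"
  shows "(\<Sum>i\<in>I. w i / min (b i) (beta * sqrt (w i))) \<le> (\<Sum>i\<in>I. w i / y i)"
proof -
  define a where "a i = min (b i) (beta * sqrt (w i))" for i
  have tangent: "w i / a i - (y i - a i) / beta^2 \<le> w i / y i" if i: "i \<in> I" for i
  proof -
    have wi: "w i > 0" and yi: "0 < y i" "y i \<le> b i" using w y i by auto
    have ai: "a i > 0" using wi yi beta unfolding a_def by simp
    have "w i / a i^2 * (y i - a i) \<le> (y i - a i) / beta^2"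
    proof (cases "a i = beta * sqrt (w i)")
      case True
      then have "w i / a i^2 = 1 / beta^2" using wi beta by (simp add: power_mult_distrib)
      then show ?thesis by simp
    next
      case False
      then have "a i = b i" unfolding a_def by (metis min_def)
      then have "y i - a i \<le> 0" using yi by simp
      moreover have "a i^2 \<le> (beta * sqrt (w i))^2"
        using ai unfolding a_def by (intro power_mono) auto
      then have "1 / beta^2 \<le> w i / a i^2" using beta ai wi by (simp add: field_simps power_mult_distrib)
      ultimately have "w i / a i^2 * (y i - a i) \<le> 1 / beta^2 * (y i - a i)"
        by (intro mult_right_mono_neg)
      then show ?thesis by simp
    qed
    with weight_div_ge_tangent[of "w i" "a i" "y i"] wi ai yi show ?thesis by linarith
  qed
  have "(\<Sum>i\<in>I. (y i - a i) / beta^2) = (sum y I - sum a I) / beta^2"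
    by (simp only: sum_subtractf[symmetric] sum_divide_distrib)
  also have "\<dots> \<le> 0" using ysum asum unfolding a_def[symmetric] by (simp add: divide_nonpos_nonneg)
  finally have "(\<Sum>i\<in>I. w i / a i) \<le> (\<Sum>i\<in>I. w i / a i - (y i - a i) / beta^2)"
    by (simp add: sum_subtractf)
  also have "\<dots> \<le> (\<Sum>i\<in>I. w i / y i)" by (intro sum_mono tangent)
  finally show ?thesis unfolding a_def .
qed

lemma share_le_sigma:
  assumes "eps \<ge> 0" "\<forall>i\<in>{1..M}. r i > 0" "l \<in> {1..M}"
  shows "r l / (Ssum M r + 1) \<le> sigma M eps r l"
proof -
  let ?E = "exp (- r l * eps)"
  have "r l \<le> Ssum M r" unfolding Ssum_def using assms by (intro member_le_sum) (auto intro: less_imp_le)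
  moreover have "r l > 0" using assms by simp
  then have "?E \<le> 1" using assms(1) by simp
  ultimately have "(1 - ?E) * (Ssum M r - r l) \<ge> 0" by simp
  then have "r l \<le> (1 - ?E) * Ssum M r + r l * ?E" by (simp add: algebra_simps)
  moreover have "Ssum M r \<ge> 0" unfolding Ssum_def using assms by (intro sum_nonneg) (auto intro: less_imp_le)
  ultimately show ?thesis unfolding sigma_def by (intro divide_right_mono) auto
qed

lemma DeltaBar_ge_sum_div_shares:
  assumes "eps \<ge> 0" "\<forall>i\<in>{1..M}. r i > 0" "\<forall>i\<in>{1..M}. w i \<ge> 0"
  shows "(\<Sum>l\<in>{1..M}. w l / (r l / (Ssum M r + 1))) + (\<Sum>l\<in>{1..M}. w l) \<le> DeltaBar M w eps r"
proof -
  let ?S = "Ssum M r"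
  have S: "?S \<ge> 0" unfolding Ssum_def using assms by (intro sum_nonneg) (auto intro: less_imp_le)
  have "w l / (r l / (?S + 1)) \<le> w l * exp (- r l * eps) / r l * exp (eps * ?S) * (1 + ?S)"
    if l: "l \<in> {1..M}" for l
  proof -
    have "r l \<le> ?S" unfolding Ssum_def using assms l by (intro member_le_sum) (auto intro: less_imp_le)
    then have "1 \<le> exp (eps * (?S - r l))" using assms by simp
    also have "\<dots> = exp (- r l * eps) * exp (eps * ?S)"
      by (simp add: exp_add[symmetric] algebra_simps)
    finally have "w l * (1 + ?S) / r l * 1 \<le> w l * (1 + ?S) / r l * (exp (- r l * eps) * exp (eps * ?S))"
      using assms l S by (intro mult_left_mono) (auto intro!: divide_nonneg_pos)
    then show ?thesis by (simp add: mult_ac add.commute)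
  qed
  then show ?thesis unfolding DeltaBar_def sum_distrib_right by (intro add_right_mono sum_mono)
qed

lemma DeltaBar_feasible_ge:
  assumes eps: "eps \<ge> 0" and beta: "beta > 0" and w: "\<forall>i\<in>{1..M}. w i > 0"
    and asum: "(\<Sum>i\<in>{1..M}. min (b i) (beta * sqrt (w i))) = 1"
    and feas: "feasible M b eps r"
  shows "(\<Sum>l\<in>{1..M}. w l) + (\<Sum>i\<in>{1..M}. w i / min (b i) (beta * sqrt (w i)))
           \<le> DeltaBar M w eps r"
proof -
  define y where "y l = r l / (Ssum M r + 1)" for l
  have r: "\<forall>i\<in>{1..M}. r i > 0" using feas unfolding feasible_def by auto
  have S: "Ssum M r \<ge> 0" unfolding Ssum_def using r by (intro sum_nonneg) (auto intro: less_imp_le)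
  have "\<forall>i\<in>{1..M}. 0 < y i \<and> y i \<le> b i"
    using share_le_sigma[OF eps r] feas r S unfolding feasible_def y_def by force
  moreover have "sum y {1..M} = Ssum M r / (Ssum M r + 1)"
    unfolding y_def Ssum_def by (simp add: sum_divide_distrib)
  then have "sum y {1..M} \<le> 1" using S by simp
  ultimately have "(\<Sum>i\<in>{1..M}. w i / min (b i) (beta * sqrt (w i))) \<le> (\<Sum>i\<in>{1..M}. w i / y i)"
    using sum_weight_div_ge_water_filling[OF beta w] asum by blast
  moreover have "\<forall>i\<in>{1..M}. 0 \<le> w i" using w by (simp add: less_imp_le)
  then have "(\<Sum>i\<in>{1..M}. w i / y i) + (\<Sum>l\<in>{1..M}. w l) \<le> DeltaBar M w eps r"
    unfolding y_def by (rule DeltaBar_ge_sum_div_shares[OF eps r])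
  ultimately show ?thesis by linarith
qed

lemma sigma_scaled_xstar_le:
  assumes eps: "eps > 0" and asum: "sum a {1..M} = 1"
    and l: "l \<in> {1..M}" and al: "0 < a l" "a l \<le> 1"
  shows "sigma M eps (\<lambda>i. a i * xstar eps) l \<le> a l"
proof -
  define x where "x = xstar eps"
  have x: "x > 0" and xe: "x * (1 + x) * eps = 1"
    using xstar_pos[OF eps] xstar_equation[OF eps] unfolding x_def by auto
  have S: "Ssum M (\<lambda>i. a i * x) = x" unfolding Ssum_def using asum by (simp add: sum_distrib_right[symmetric])
  let ?E = "exp (- (a l * x) * eps)"
  have "1 - ?E \<le> a l * x * eps" using exp_ge_add_one_self[of "- (a l * x) * eps"] by simp
  then have "x * (1 - a l) * (1 - ?E) \<le> x * (1 - a l) * (a l * x * eps)"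
    using al x by (intro mult_left_mono) auto
  also have "\<dots> = a l * ((1 - a l) * (x * x * eps))" by simp
  also have "\<dots> \<le> a l * 1"
  proof -
    have "x * eps > 0" using x eps by simp
    then have "x * x * eps \<le> 1" using xe by (simp add: algebra_simps)
    then have "(1 - a l) * (x * x * eps) \<le> 1" using al x eps by (rule_tac mult_le_one) auto
    then show ?thesis using al by (intro mult_left_mono) auto
  qed
  finally have "(1 - ?E) * x + a l * x * ?E \<le> a l * (x + 1)" by (simp add: algebra_simps)
  then show ?thesis unfolding sigma_def S x_def[symmetric] using x by (simp add: divide_le_eq)
qed

lemma DeltaBar_scaled_eq:
  assumes x: "x > 0" and asum: "sum a {1..M} = 1" and a: "\<forall>i\<in>{1..M}. a i > 0"
  shows "DeltaBar M w eps (\<lambda>i. a i * x)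
           = (\<Sum>l\<in>{1..M}. w l / a l * (exp ((1 - a l) * (eps * x)) * (1 + 1 / x))) + (\<Sum>l\<in>{1..M}. w l)"
proof -
  have S: "Ssum M (\<lambda>i. a i * x) = x" unfolding Ssum_def using asum by (simp add: sum_distrib_right[symmetric])
  have term_eq: "w l * exp (- (a l * x) * eps) / (a l * x) * exp (eps * x) * (1 + x)
          = w l / a l * (exp ((1 - a l) * (eps * x)) * (1 + 1 / x))" if "l \<in> {1..M}" for l
  proof -
    have "exp (- (a l * x) * eps) * exp (eps * x) = exp ((1 - a l) * (eps * x))"
      by (simp add: exp_add[symmetric] algebra_simps)
    then show ?thesis using a that x by (simp add: field_simps)
  qed
  show ?thesis unfolding DeltaBar_def S sum_distrib_right
    by (intro arg_cong2[where f="(+)"] sum.cong refl term_eq)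
qed

lemma energy_adequate_gap_bounds:
  assumes w: "\<forall>i\<in>{1..M}. w i > 0" and b: "\<forall>i\<in>{1..M}. b i > 0" and beta: "beta > 0"
    and asum: "(\<Sum>i\<in>{1..M}. min (b i) (beta * sqrt (w i))) = 1"
    and eps: "eps > 0"
  defines "a i \<equiv> min (b i) (beta * sqrt (w i))"
  shows "0 \<le> DeltaBar M w eps (rstar w b beta eps) - DeltaOpt M w b eps"
    and "DeltaBar M w eps (rstar w b beta eps) - DeltaOpt M w b eps
           \<le> (\<Sum>l\<in>{1..M}. w l / a l * (exp ((1 - a l) * (eps * xstar eps)) * (1 + 1 / xstar eps) - 1))"
proof -
  let ?A = "{DeltaBar M w eps r | r. feasible M b eps r}"
  let ?L = "(\<Sum>l\<in>{1..M}. w l) + (\<Sum>i\<in>{1..M}. w i / a i)"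
  have rstar: "rstar w b beta eps = (\<lambda>i. a i * xstar eps)" unfolding rstar_def a_def by simp
  have asum': "sum a {1..M} = 1" using asum unfolding a_def .
  have a_pos: "\<forall>i\<in>{1..M}. 0 < a i" using w b beta unfolding a_def by simp
  have "a i \<le> 1" if "i \<in> {1..M}" for i
    using member_le_sum[of i "{1..M}" a] that a_pos asum' by (simp add: less_imp_le)
  with a_pos have a: "\<forall>i\<in>{1..M}. 0 < a i \<and> a i \<le> 1" by blast
  have "feasible M b eps (rstar w b beta eps)"
    unfolding feasible_def rstar
    using sigma_scaled_xstar_le[OF eps asum'] a xstar_pos[OF eps] order_trans[OF _ min.cobounded1]
    unfolding a_def by force
  then have mem: "DeltaBar M w eps (rstar w b beta eps) \<in> ?A" by blast
  have lower: "?L \<le> z" if "z \<in> ?A" for z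
    using that DeltaBar_feasible_ge[OF _ beta w asum] eps unfolding a_def by force
  have "DeltaOpt M w b eps \<le> DeltaBar M w eps (rstar w b beta eps)"
    unfolding DeltaOpt_def using mem lower by (intro cInf_lower) (auto simp: bdd_below_def)
  then show "0 \<le> DeltaBar M w eps (rstar w b beta eps) - DeltaOpt M w b eps" by simp
  have "?L \<le> DeltaOpt M w b eps"
    unfolding DeltaOpt_def using mem lower by (intro cInf_greatest) auto
  moreover have "DeltaBar M w eps (rstar w b beta eps) = ?L
      + (\<Sum>l\<in>{1..M}. w l / a l * (exp ((1 - a l) * (eps * xstar eps)) * (1 + 1 / xstar eps) - 1))"
    unfolding rstar DeltaBar_scaled_eq[OF xstar_pos[OF eps] asum' a_pos] using a
    by (simp add: sum_subtractf algebra_simps)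
  ultimately show "DeltaBar M w eps (rstar w b beta eps) - DeltaOpt M w b eps
      \<le> (\<Sum>l\<in>{1..M}. w l / a l * (exp ((1 - a l) * (eps * xstar eps)) * (1 + 1 / xstar eps) - 1))"
    by linarith
qed

lemma water_level_pos:
  assumes "0 \<le> beta" and "\<forall>i\<in>I. b i > 0"
    and "(\<Sum>i\<in>I. min (b i) (beta * sqrt (w i))) = 1"
  shows "beta > 0"
proof (rule ccontr)
  assume "\<not> beta > 0"
  then have "(\<Sum>i\<in>I. min (b i) (beta * sqrt (w i))) = 0"
    using assms(1,2) by (intro sum.neutral) auto
  with assms(3) show False by simp
qed

lemma energy_adequate_gap_eventually_le:
  assumes w: "\<forall>i\<in>{1..M}. w i > 0" and b: "\<forall>i\<in>{1..M}. b i > 0" and beta: "beta > 0"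
    and asum: "(\<Sum>i\<in>{1..M}. min (b i) (beta * sqrt (w i))) = 1"
  shows "eventually (\<lambda>e. \<bar>DeltaBar M w e (rstar w b beta e) - DeltaOpt M w b e\<bar>
           \<le> 2 * sqrt e * (\<Sum>i\<in>{1..M}. w i / min (b i) (beta * sqrt (w i)))) (at_right 0)"
proof -
  define a where "a i = min (b i) (beta * sqrt (w i))" for i
  have a_pos: "\<forall>l\<in>{1..M}. a l > 0" using w b beta unfolding a_def by simp
  have "eventually (\<lambda>e. \<forall>l\<in>{1..M}.
          exp ((1 - a l) * (e * xstar e)) * (1 + 1 / xstar e) - 1 \<le> 2 * sqrt e) (at_right 0)"
    using a_pos by (intro eventually_ball_finite) (auto intro: eventually_xstar_excess_le)
  then show ?thesis
    using eventually_at_right_less[of 0] unfolding a_def[symmetric]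
  proof eventually_elim
    case (elim e)
    note bounds = energy_adequate_gap_bounds[OF w b beta asum elim(2), folded a_def]
    have "\<bar>DeltaBar M w e (rstar w b beta e) - DeltaOpt M w b e\<bar> \<le> (\<Sum>l\<in>{1..M}.
            w l / a l * (exp ((1 - a l) * (e * xstar e)) * (1 + 1 / xstar e) - 1))"
      using bounds by simp
    also have "\<dots> \<le> (\<Sum>l\<in>{1..M}. w l / a l * (2 * sqrt e))"
      using elim(1) w a_pos by (intro sum_mono mult_left_mono) (auto intro: less_imp_le)
    also have "\<dots> = 2 * sqrt e * (\<Sum>i\<in>{1..M}. w i / a i)"
      by (simp add: sum_distrib_left mult_ac)
    finally show ?case .
  qed
qed

theorem theorem1:
  fixes M :: nat and w b :: "nat \<Rightarrow> real" and beta :: real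
  assumes M: "M \<ge> 1"
    and w: "\<forall>i\<in>{1..M}. w i > 0"
    and b: "\<forall>i\<in>{1..M}. b i > 0"
    and bsum: "(\<Sum>i\<in>{1..M}. b i) \<ge> 1"
    and beta_range: "0 \<le> beta" "beta \<le> Max ((\<lambda>l. b l / sqrt (w l)) ` {1..M})"
    and beta_root: "(\<Sum>i\<in>{1..M}. min (b i) (beta * sqrt (w i))) = 1"
  shows "\<exists>h :: real \<Rightarrow> real.
           ((\<lambda>e. h e / sqrt e) \<longlongrightarrow> 0) (at_right 0) \<and>
           (\<forall>eps>0. \<bar>DeltaBar M w eps (rstar w b beta eps) - DeltaOpt M w b eps\<bar>
              \<le> 2 * sqrt eps * (\<Sum>i\<in>{1..M}. w i / min (b i) (beta * sqrt (w i))) + h eps)"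
proof -
  \<comment> \<open>\<open>M \<ge> 1\<close>, \<open>\<Sum> b i \<ge> 1\<close> and the upper bound on \<open>\<beta>\<close> only ensure that \<open>\<beta>\<close> exists.\<close>
  define gap where "gap eps = DeltaBar M w eps (rstar w b beta eps) - DeltaOpt M w b eps" for eps
  define C1 where "C1 = (\<Sum>i\<in>{1..M}. w i / min (b i) (beta * sqrt (w i)))"
  have "beta > 0" using water_level_pos[OF beta_range(1) b beta_root] .
  then have "eventually (\<lambda>e. \<bar>gap e\<bar> \<le> 2 * sqrt e * C1) (at_right 0)"
    unfolding gap_def C1_def using energy_adequate_gap_eventually_le w b beta_root by blast
  then have "((\<lambda>e. max 0 (\<bar>gap e\<bar> - 2 * sqrt e * C1) / sqrt e) \<longlongrightarrow> 0) (at_right 0)"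
    by (intro tendsto_eventually) (auto elim: eventually_mono)
  then have "\<exists>h. ((\<lambda>e. h e / sqrt e) \<longlongrightarrow> 0) (at_right 0) \<and>
               (\<forall>eps>0. \<bar>gap eps\<bar> \<le> 2 * sqrt eps * C1 + h eps)"
    by (intro exI[of _ "\<lambda>e. max 0 (\<bar>gap e\<bar> - 2 * sqrt e * C1)"]) auto
  then show ?thesis unfolding gap_def C1_def .
qed

end
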